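(* Let $A=\{(x,y)\in\mathbb{R}^2: 0\le x\le m,\ u_A(x)\le y\le v_A(x)\}$ and $B=\{(x,y)\in\mathbb{R}^2: 0\le x\le n,\ u_B(x)\le y\le v_B(x)\}$ be two convex bodies in the plane, where $m,n>0$. Then $$|A+B|=\left(\frac{|A|}{m}+\frac{|B|}{n}\right)(m+n)$$ if and only if there is a pair $A',B'$ of homothetic convex bodies such that $A$ is a vertical stretching of $A'$ and $B$ is a vertical stretching of $B'$.
   Context: A convex body is a compact convex set with nonempty interior; $|X|$ denotes area; $u_A,u_B$ are convex and $v_A,v_B$ concave functions. For a convex body $X=\{(x,y): x\in\pi(X),\ u_X(x)\le y\le v_X(x)\}$ (where $\pi(x,y)=x$), a vertical stretching of $X$ of amount $h\ge0$ is $\{(x,y): x\in\pi(X),\ u_X(x)\le y\le v_X(x)+h\}$. Two convex bodies are homothetic if one is the image of the other under a map $z\mapsto \lambda z+t$ with $\lambda>0$, $t\in\mathbb{R}^2$. *)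

theory Defs
  imports "HOL-Analysis.Analysis"
begin

definition convex_body :: "(real \<times> real) set \<Rightarrow> bool" where
  "convex_body X \<longleftrightarrow> compact X \<and> convex X \<and> interior X \<noteq> {}"

definition area :: "(real \<times> real) set \<Rightarrow> real" where
  "area X = measure lebesgue X"

definition minkowski_sum :: "(real \<times> real) set \<Rightarrow> (real \<times> real) set \<Rightarrow> (real \<times> real) set" where
  "minkowski_sum X Y = {a + b | a b. a \<in> X \<and> b \<in> Y}"

definition lower_fun :: "(real \<times> real) set \<Rightarrow> real \<Rightarrow> real" where
  "lower_fun X x = Inf {y. (x, y) \<in> X}"

definition upper_fun :: "(real \<times> real) set \<Rightarrow> real \<Rightarrow> real" where
  "upper_fun X x = Sup {y. (x, y) \<in> X}"

definition vertical_stretching :: "(real \<times> real) set \<Rightarrow> real \<Rightarrow> (real \<times> real) set" where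
  "vertical_stretching X h =
     {(x, y). x \<in> fst ` X \<and> lower_fun X x \<le> y \<and> y \<le> upper_fun X x + h}"

definition is_vertical_stretching_of :: "(real \<times> real) set \<Rightarrow> (real \<times> real) set \<Rightarrow> bool" where
  "is_vertical_stretching_of Y X \<longleftrightarrow> (\<exists>h\<ge>0. Y = vertical_stretching X h)"

definition homothetic :: "(real \<times> real) set \<Rightarrow> (real \<times> real) set \<Rightarrow> bool" where
  "homothetic X Y \<longleftrightarrow> (\<exists>c>0. \<exists>t. Y = (\<lambda>z. c *\<^sub>R z + t) ` X)"

end

theory Submission
  imports Defs
begin

text \<open>
  Write z = x + y with x / m = y / n. The region between the graphs of
  uA (m z / (m + n)) + uB (n z / (m + n)) and vA (m z / (m + n)) + vB (n z / (m + n)) over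
  [0, m + n] lies inside A + B and has area exactly (|A| / m + |B| / n) (m + n). As A + B is
  a convex body, equality of areas means that A + B is this region, i.e. that
  vA x + vB y \<le> vA (m (x + y) / (m + n)) + vB (n (x + y) / (m + n)) for all admissible x, y,
  and symmetrically for the lower boundaries. For concave functions this inequality holds
  exactly when vB (n x / m) - (n / m) vA x is constant: rescaled to [0, 1] it bounds every
  increment of one function by the corresponding increment of the other, after telescoping and
  a limit, and by symmetry the increments agree. The two constants (upper and lower) say
  precisely that A and B are vertical stretchings of homothetic bodies.
\<close>

section \<open>Regions between two graphs\<close>

definition region_between :: "real set \<Rightarrow> (real \<Rightarrow> real) \<Rightarrow> (real \<Rightarrow> real) \<Rightarrow> (real \<times> real) set" where
  "region_between I f g = {(x, y). x \<in> I \<and> f x \<le> y \<and> y \<le> g x}"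

lemma region_between_cong:
  "I = J \<Longrightarrow> (\<And>x. x \<in> J \<Longrightarrow> f x = f' x) \<Longrightarrow> (\<And>x. x \<in> J \<Longrightarrow> g x = g' x) \<Longrightarrow>
    region_between I f g = region_between J f' g'"
  by (auto simp: region_between_def)

lemma closed_region_between:
  assumes "continuous_on {a..b} f" "continuous_on {a..b} g"
  shows "closed (region_between {a..b} f g)"
proof -
  let ?F = "\<lambda>p. (snd p - f (fst p), g (fst p) - snd p)"
  have "region_between {a..b} f g = ({a..b} \<times> UNIV) \<inter> ?F -` ({0..} \<times> {0..})"
    by (auto simp: region_between_def)
  moreover have "continuous_on ({a..b} \<times> UNIV) ?F"
    by (intro continuous_intros continuous_on_compose2[OF assms(1)] continuous_on_compose2[OF assms(2)]) auto
  ultimately show ?thesis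
    by (simp add: continuous_closed_preimage closed_Times)
qed

lemma measure_region_between:
  assumes "continuous_on {a..b} f" "continuous_on {a..b} g" "\<forall>x\<in>{a..b}. f x \<le> g x"
  shows "measure lebesgue (region_between {a..b} f g) = integral {a..b} (\<lambda>x. g x - f x)"
proof -
  let ?S = "region_between {a..b} f g"
  have borel: "?S \<in> sets lborel"
    using closed_region_between[OF assms(1,2)] by (simp add: borel_closed)
  then have S: "?S \<in> sets (lborel \<Otimes>\<^sub>M lborel)"
    by (subst lborel_prod)
  have slice: "emeasure lborel (Pair x -` ?S) = indicator {a..b} x * ennreal (g x - f x)" for x
  proof (cases "x \<in> {a..b}")
    case True
    then have "Pair x -` ?S = {f x..g x}"
      by (auto simp: region_between_def)
    with True assms(3) show ?thesis
      by simp
  qed (auto simp: region_between_def)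
  have int: "((\<lambda>x. g x - f x) has_integral integral {a..b} (\<lambda>x. g x - f x)) {a..b}"
    by (intro integrable_integral integrable_continuous_interval continuous_intros assms)
  have "emeasure lborel ?S = (\<integral>\<^sup>+x. emeasure lborel (Pair x -` ?S) \<partial>lborel)"
    using lborel.emeasure_pair_measure_alt[OF S] by (simp add: lborel_prod)
  also have "\<dots> = (\<integral>\<^sup>+x. ennreal (indicator {a..b} x * (g x - f x)) \<partial>lborel)"
    by (simp add: slice indicator_mult_ennreal mult.commute)
  also have "\<dots> = ennreal (integral {a..b} (\<lambda>x. g x - f x))"
    by (rule nn_integral_has_integral_lebesgue) (use assms(3) int in auto)
  finally have "emeasure lborel ?S = ennreal (integral {a..b} (\<lambda>x. g x - f x))" .
  moreover have "integral {a..b} (\<lambda>x. g x - f x) \<ge> 0"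
    by (rule integral_nonneg) (use int assms(3) in auto)
  ultimately show ?thesis
    using borel by (simp add: measure_def)
qed

lemma fst_region_between: "\<forall>x\<in>I. f x \<le> g x \<Longrightarrow> fst ` region_between I f g = I"
  by (force simp: region_between_def)

lemma lower_fun_region_between: "x \<in> I \<Longrightarrow> f x \<le> g x \<Longrightarrow> lower_fun (region_between I f g) x = f x"
proof -
  assume "x \<in> I" "f x \<le> g x"
  then have "{y. (x, y) \<in> region_between I f g} = {f x..g x}"
    by (auto simp: region_between_def)
  with \<open>f x \<le> g x\<close> show ?thesis
    by (simp add: lower_fun_def)
qed

lemma upper_fun_region_between: "x \<in> I \<Longrightarrow> f x \<le> g x \<Longrightarrow> upper_fun (region_between I f g) x = g x"
proof -
  assume "x \<in> I" "f x \<le> g x"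
  then have "{y. (x, y) \<in> region_between I f g} = {f x..g x}"
    by (auto simp: region_between_def)
  with \<open>f x \<le> g x\<close> show ?thesis
    by (simp add: upper_fun_def)
qed

lemma region_between_eq_iff:
  assumes "\<forall>x\<in>I. f x \<le> g x" "\<forall>x\<in>J. f' x \<le> g' x"
  shows "region_between I f g = region_between J f' g' \<longleftrightarrow>
    I = J \<and> (\<forall>x\<in>I. f x = f' x \<and> g x = g' x)"
proof
  assume eq: "region_between I f g = region_between J f' g'"
  then have "I = J"
    using assms by (metis fst_region_between)
  moreover have "f x = f' x \<and> g x = g' x" if "x \<in> I" for x
    using eq assms that \<open>I = J\<close>
    by (metis lower_fun_region_between upper_fun_region_between)
  ultimately show "I = J \<and> (\<forall>x\<in>I. f x = f' x \<and> g x = g' x)"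
    by blast
qed (elim conjE, rule region_between_cong, auto)

lemma vertical_stretching_region_between:
  assumes "\<forall>x\<in>I. f x \<le> g x"
  shows "vertical_stretching (region_between I f g) h = region_between I f (\<lambda>x. g x + h)"
  using assms unfolding vertical_stretching_def
  by (auto simp: fst_region_between lower_fun_region_between upper_fun_region_between
      region_between_def[of I f "\<lambda>x. g x + h"])

lemma compact_vertical_section:
  fixes X :: "('a::t1_space \<times> 'b::topological_space) set"
  assumes "compact X"
  shows "compact {y. (x, y) \<in> X}"
proof -
  have "{y. (x, y) \<in> X} = snd ` (X \<inter> {x} \<times> UNIV)"
    by force
  moreover have "compact (X \<inter> {x} \<times> UNIV)"
    by (rule compact_Int_closed[OF assms]) (simp add: closed_Times[OF closed_singleton closed_UNIV])
  ultimately show ?thesis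
    by (auto intro!: compact_continuous_image continuous_intros)
qed

lemma
  assumes "compact X" "(x, y) \<in> X"
  shows lower_fun_mem: "(x, lower_fun X x) \<in> X"
    and upper_fun_mem: "(x, upper_fun X x) \<in> X"
    and lower_fun_le: "lower_fun X x \<le> y"
    and le_upper_fun: "y \<le> upper_fun X x"
proof -
  let ?T = "{y. (x, y) \<in> X}"
  have T: "compact ?T" "?T \<noteq> {}"
    using compact_vertical_section[OF assms(1)] assms(2) by auto
  then have "bdd_below ?T" "bdd_above ?T"
    by (auto intro: bounded_imp_bdd_below bounded_imp_bdd_above compact_imp_bounded)
  with T assms(2) show "lower_fun X x \<le> y" "y \<le> upper_fun X x"
    by (auto simp: lower_fun_def upper_fun_def intro: cInf_lower cSup_upper)
  show "(x, lower_fun X x) \<in> X" "(x, upper_fun X x) \<in> X"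
    using closed_contains_Inf[of ?T] closed_contains_Sup[of ?T] T \<open>bdd_below ?T\<close> \<open>bdd_above ?T\<close>
    by (auto simp: lower_fun_def upper_fun_def compact_imp_closed)
qed

lemma convex_compact_eq_region_between:
  assumes "convex X" "compact X"
  shows "X = region_between (fst ` X) (lower_fun X) (upper_fun X)"
proof
  show "X \<subseteq> region_between (fst ` X) (lower_fun X) (upper_fun X)"
    using assms(2) by (force simp: region_between_def intro: lower_fun_le le_upper_fun)
next
  show "region_between (fst ` X) (lower_fun X) (upper_fun X) \<subseteq> X"
  proof (clarsimp simp: region_between_def)
    fix x y y0
    assume x: "(x, y0) \<in> X" and y: "lower_fun X x \<le> y" "y \<le> upper_fun X x"
    have "{y. (x, y) \<in> X} = snd ` (X \<inter> {x} \<times> UNIV)"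
      by force
    then have "is_interval {y. (x, y) \<in> X}"
      using assms(1) by (simp add: is_interval_convex_1 convex_Int convex_Times convex_linear_image linear_snd)
    moreover have "lower_fun X x \<in> {y. (x, y) \<in> X}" "upper_fun X x \<in> {y. (x, y) \<in> X}"
      using lower_fun_mem[OF assms(2) x] upper_fun_mem[OF assms(2) x] by auto
    ultimately show "(x, y) \<in> X"
      using y unfolding is_interval_1 by blast
  qed
qed

section \<open>Continuity of convex and concave boundaries\<close>

lemma concave_on_Icc_lower_bound:
  fixes v :: "real \<Rightarrow> real"
  assumes "concave_on {a..b} v" "x0 \<in> {a..b}"
  obtains K where "\<forall>x\<in>{a..b}. v x0 - K * \<bar>x - x0\<bar> \<le> v x"
proof
  let ?R = "\<bar>v b - v x0\<bar> / (b - x0)" and ?L = "\<bar>v a - v x0\<bar> / (x0 - a)"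
  have sub: "concave_on S v" if "S \<subseteq> {a..b}" "convex S" for S
    using assms(1) that by (simp add: concave_on_def convex_on_subset)
  show "\<forall>x\<in>{a..b}. v x0 - (?R + ?L) * \<bar>x - x0\<bar> \<le> v x"
  proof
    fix x assume x: "x \<in> {a..b}"
    show "v x0 - (?R + ?L) * \<bar>x - x0\<bar> \<le> v x"
    proof (cases "x0 \<le> x")
      case True
      have "(v b - v x0) / (b - x0) * (x - x0) + v x0 \<le> v x"
        using concave_onD_Icc'[OF sub, of x0 b x] assms(2) True x by simp
      moreover have "- ?R * (x - x0) \<le> (v b - v x0) / (b - x0) * (x - x0)"
        using True x by (intro mult_right_mono) (auto simp: divide_simps)
      moreover have "?R * (x - x0) \<le> (?R + ?L) * (x - x0)"
        using True assms(2) by (intro mult_right_mono) auto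
      ultimately show ?thesis
        using True by (simp add: abs_of_nonneg)
    next
      case False
      have "(v a - v x0) / (x0 - a) * (x0 - x) + v x0 \<le> v x"
        using concave_onD_Icc''[OF sub, of a x0 x] assms(2) False x by simp
      moreover have "- ?L * (x0 - x) \<le> (v a - v x0) / (x0 - a) * (x0 - x)"
        using False x by (intro mult_right_mono) (auto simp: divide_simps)
      moreover have "?L * (x0 - x) \<le> (?R + ?L) * (x0 - x)"
        using False assms(2) by (intro mult_right_mono) auto
      ultimately show ?thesis
        using False by (simp add: abs_of_neg)
    qed
  qed
qed

lemma compact_below_graph_imp_upper_semicontinuous:
  fixes v :: "real \<Rightarrow> real"
  assumes S: "compact S" and below: "\<forall>(x, y)\<in>S. y \<le> v x" and e: "e > 0"
  obtains d where "d > 0" "\<forall>x. (x, v x) \<in> S \<longrightarrow> dist x x0 < d \<longrightarrow> v x < v x0 + e"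
proof -
  define F where "F = fst ` (S \<inter> {p. v x0 + e \<le> snd p})"
  have "compact F"
    unfolding F_def using S
    by (intro compact_continuous_image compact_Int_closed closed_Collect_le continuous_intros) auto
  moreover have "x0 \<notin> F"
    using below e by (force simp: F_def)
  ultimately obtain d where "d > 0" "ball x0 d \<subseteq> - F"
    by (meson ComplI compact_imp_closed open_Compl open_contains_ball)
  then show ?thesis
    by (intro that[of d]) (force simp: F_def dist_commute)+
qed

lemma continuous_on_concave_upper_boundary:
  fixes u v :: "real \<Rightarrow> real"
  assumes S: "compact (region_between {a..b} u v)" and le: "\<forall>x\<in>{a..b}. u x \<le> v x"
    and v: "concave_on {a..b} v"
  shows "continuous_on {a..b} v"
  unfolding continuous_on_iff
proof (intro ballI allI impI)
  fix x0 e :: real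
  assume x0: "x0 \<in> {a..b}" and e: "0 < e"
  obtain K where K: "\<forall>x\<in>{a..b}. v x0 - K * \<bar>x - x0\<bar> \<le> v x"
    using concave_on_Icc_lower_bound[OF v x0] by blast
  obtain d where d: "d > 0"
    "\<forall>x. (x, v x) \<in> region_between {a..b} u v \<longrightarrow> dist x x0 < d \<longrightarrow> v x < v x0 + e"
    by (rule compact_below_graph_imp_upper_semicontinuous[OF S _ e]) (auto simp: region_between_def)
  show "\<exists>d>0. \<forall>x\<in>{a..b}. dist x x0 < d \<longrightarrow> dist (v x) (v x0) < e"
  proof (intro exI[of _ "min d (e / (\<bar>K\<bar> + 1))"] conjI ballI impI)
    fix x assume x: "x \<in> {a..b}" and dx: "dist x x0 < min d (e / (\<bar>K\<bar> + 1))"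
    then have "v x < v x0 + e"
      using d le by (auto simp: region_between_def)
    moreover have "K * \<bar>x - x0\<bar> < e"
    proof -
      have "K * \<bar>x - x0\<bar> \<le> (\<bar>K\<bar> + 1) * \<bar>x - x0\<bar>"
        by (intro mult_right_mono) auto
      also have "\<dots> < e"
        using dx by (simp add: dist_real_def field_simps)
      finally show ?thesis .
    qed
    ultimately show "dist (v x) (v x0) < e"
      using K x by (force simp: dist_real_def abs_less_iff)
  qed (use d e in auto)
qed

lemma continuous_on_convex_lower_boundary:
  fixes u v :: "real \<Rightarrow> real"
  assumes "compact (region_between {a..b} u v)" "\<forall>x\<in>{a..b}. u x \<le> v x" "convex_on {a..b} u"
  shows "continuous_on {a..b} u"
proof -
  have "region_between {a..b} (\<lambda>x. - v x) (\<lambda>x. - u x) = (\<lambda>(x, y). (x, - y)) ` region_between {a..b} u v"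
    by (auto simp: region_between_def) (rule_tac x = "(_, - _)" in image_eqI, auto)
  also have "compact \<dots>"
    using assms(1) by (intro compact_continuous_image) (auto simp: case_prod_beta intro!: continuous_intros)
  finally have "continuous_on {a..b} (\<lambda>x. - u x)"
    using assms(2,3) by (intro continuous_on_concave_upper_boundary) (auto simp: convex_on_iff_concave)
  then show ?thesis
    using continuous_on_minus by fastforce
qed

section \<open>Concave functions dominated at weighted means\<close>

lemma concave_on_secant_le:
  fixes f :: "real \<Rightarrow> real"
  assumes "concave_on S f" "x \<in> S" "y \<in> S" "0 \<le> t" "t \<le> 1"
  shows "t * (f y - f x) \<le> f (x + t * (y - x)) - f x"
proof -
  have "(1 - t) * f x + t * f y \<le> f ((1 - t) * x + t * y)"
    using concave_onD[OF assms(1,4,5,2,3)] by simp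
  moreover have "(1 - t) * x + t * y = x + t * (y - x)"
    by (simp add: algebra_simps)
  ultimately show ?thesis
    by (simp add: algebra_simps)
qed

lemma concave_on_compose_mult:
  fixes f :: "real \<Rightarrow> real"
  assumes "concave_on T f" "(*) c ` S \<subseteq> T" "convex S"
  shows "concave_on S (\<lambda>s. f (c * s))"
  unfolding concave_on_iff
proof (intro conjI ballI allI impI)
  fix x y u v :: real
  assume "x \<in> S" "y \<in> S" "0 \<le> u" "0 \<le> v" "u + v = 1"
  moreover from this have "c * x \<in> T" "c * y \<in> T"
    using assms(2) by auto
  moreover have "c * (u *\<^sub>R x + v *\<^sub>R y) = u *\<^sub>R (c * x) + v *\<^sub>R (c * y)"
    by (simp add: algebra_simps)
  ultimately show "u * f (c * x) + v * f (c * y) \<le> f (c * (u *\<^sub>R x + v *\<^sub>R y))"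
    using assms(1,2) unfolding concave_on_iff by auto
qed (fact assms(3))

definition weighted_mean_dominated :: "real \<Rightarrow> real \<Rightarrow> (real \<Rightarrow> real) \<Rightarrow> (real \<Rightarrow> real) \<Rightarrow> bool" where
  "weighted_mean_dominated \<mu> \<nu> P Q \<longleftrightarrow>
    (\<forall>a\<in>{0..1}. \<forall>b\<in>{0..1}. \<mu> * P a + \<nu> * Q b \<le> \<mu> * P (\<mu> * a + \<nu> * b) + \<nu> * Q (\<mu> * a + \<nu> * b))"

locale concave_pair =
  fixes \<mu> \<nu> :: real and P Q :: "real \<Rightarrow> real"
  assumes weights: "\<mu> > 0" "\<nu> > 0" "\<mu> + \<nu> = 1"
    and concave: "concave_on {0..1} P" "concave_on {0..1} Q"
    and dominated: "weighted_mean_dominated \<mu> \<nu> P Q"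
begin

lemma commute: "concave_pair \<nu> \<mu> Q P"
  using weights concave dominated
  by unfold_locales (auto simp: weighted_mean_dominated_def add.commute)

lemma balanced_increments_le:
  assumes "s + e \<in> {0..1}" "s - e' \<in> {0..1}" "\<mu> * e = \<nu> * e'"
  shows "\<mu> * (P (s + e) - P s) \<le> \<nu> * (Q s - Q (s - e'))"
proof -
  have "\<mu> * (s + e) + \<nu> * (s - e') = (\<mu> + \<nu>) * s + (\<mu> * e - \<nu> * e')"
    by (simp add: algebra_simps)
  then have mean: "\<mu> * (s + e) + \<nu> * (s - e') = s"
    using weights(3) assms(3) by simp
  have "\<mu> * P (s + e) + \<nu> * Q (s - e') \<le>
      \<mu> * P (\<mu> * (s + e) + \<nu> * (s - e')) + \<nu> * Q (\<mu> * (s + e) + \<nu> * (s - e'))"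
    using dominated assms(1,2) unfolding weighted_mean_dominated_def by blast
  then show ?thesis
    unfolding mean by (simp add: algebra_simps)
qed

lemma step_le:
  assumes d: "0 < d" "d \<le> s" "s + d \<le> 1"
  shows "P (s + d) - P s \<le> Q s - Q (s - d)"
proof -
  \<comment> \<open>Shrink the step to t d for P and t' d for Q with \<mu> t = \<nu> t', then use concavity
      to compare the shrunken increments with the full ones.\<close>
  define t where "t = min 1 (\<nu> / \<mu>)"
  define t' where "t' = \<mu> / \<nu> * t"
  have t: "0 < t" "t \<le> 1" and t': "0 < t'" "t' \<le> 1" and tt': "\<mu> * t = \<nu> * t'"
    using weights by (auto simp: t_def t'_def min_def field_simps)
  have s: "s \<in> {0..1}" "s + d \<in> {0..1}" "s - d \<in> {0..1}"
    using d by auto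
  have "0 \<le> t * d" "t * d \<le> d" "0 \<le> t' * d" "t' * d \<le> d"
    using d t t' by (simp_all add: mult_left_le_one_le)
  then have "s + t * d \<in> {0..1}" and "s - t' * d \<in> {0..1}"
    unfolding atLeastAtMost_iff using d by linarith+
  have "t * (P (s + d) - P s) \<le> P (s + t * d) - P s"
    using concave_on_secant_le[OF concave(1) s(1,2)] t by simp
  then have "\<mu> * t * (P (s + d) - P s) \<le> \<mu> * (P (s + t * d) - P s)"
    using weights by (simp add: mult.assoc mult_left_mono)
  also have "\<dots> \<le> \<nu> * (Q s - Q (s - t' * d))"
    using balanced_increments_le \<open>s + t * d \<in> {0..1}\<close> \<open>s - t' * d \<in> {0..1}\<close> tt' by simp
  also have "\<dots> \<le> \<nu> * (t' * (Q s - Q (s - d)))"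
  proof -
    have "t' * (Q (s - d) - Q s) \<le> Q (s - t' * d) - Q s"
      using concave_on_secant_le[OF concave(2) s(1,3)] t' by simp
    then show ?thesis
      using weights by (intro mult_left_mono) (auto simp: algebra_simps)
  qed
  also have "\<dots> = \<mu> * t * (Q s - Q (s - d))"
    by (simp add: tt')
  finally show ?thesis
    using weights t by simp
qed

lemma telescope_le:
  assumes "0 < d" "d \<le> s" "s + real N * d \<le> 1"
  shows "P (s + real N * d) - P s \<le> Q (s + real N * d - d) - Q (s - d)"
  using assms(3)
proof (induction N)
  case (Suc N)
  have "P (s + real N * d + d) - P (s + real N * d) \<le> Q (s + real N * d) - Q (s + real N * d - d)"
    by (intro step_le) (use Suc.prems assms(1,2) in \<open>auto simp: algebra_simps intro: add_increasing2\<close>)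
  moreover have "s + real N * d \<le> 1"
    using Suc.prems assms(1) by (simp add: algebra_simps)
  then have "P (s + real N * d) - P s \<le> Q (s + real N * d - d) - Q (s - d)"
    by (rule Suc.IH)
  ultimately show ?case
    by (simp add: algebra_simps)
qed simp

lemma increment_le:
  assumes Q: "continuous_on {0..1} Q" and st: "0 < s" "s \<le> t" "t \<le> 1"
  shows "P t - P s \<le> Q t - Q s"
proof (cases "s = t")
  case False
  define d where "d N = (t - s) / real N" for N :: nat
  have d: "d \<longlonglongrightarrow> 0"
    unfolding d_def by (rule lim_const_over_n)
  have small: "\<forall>\<^sub>F N in sequentially. 0 < N \<and> 0 \<le> d N \<and> d N < s"
    using eventually_gt_at_top[of 0] order_tendstoD(2)[OF d st(1)]
    by eventually_elim (use st in \<open>auto simp: d_def\<close>)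
  have "\<forall>\<^sub>F N in sequentially. P t - P s \<le> Q (t - d N) - Q (s - d N)"
    using small
  proof eventually_elim
    case (elim N)
    then have "s + real N * d N = t" "0 < d N"
      using False st by (auto simp: d_def)
    with elim show ?case
      using telescope_le[of "d N" s N] st by auto
  qed
  moreover have "((\<lambda>N. Q (t - d N) - Q (s - d N)) \<longlongrightarrow> Q t - Q s) sequentially"
  proof (intro tendsto_diff continuous_on_tendsto_compose[OF Q])
    have in01: "\<forall>\<^sub>F N in sequentially. x - d N \<in> {0..1}" if "s \<le> x" "x \<le> 1" for x
      using small by eventually_elim (use that st in auto)
    show "\<forall>\<^sub>F N in sequentially. t - d N \<in> {0..1}" "\<forall>\<^sub>F N in sequentially. s - d N \<in> {0..1}"
      using in01 st by auto
  qed (use st in \<open>auto intro: tendsto_eq_intros d\<close>)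
  ultimately show ?thesis
    by (intro tendsto_le[OF trivial_limit_sequentially _ tendsto_const]) auto
qed simp

lemma diff_const:
  assumes "continuous_on {0..1} P" "continuous_on {0..1} Q" "s \<in> {0..1}"
  shows "Q s - P s = Q 1 - P 1"
proof (rule continuous_constant_on_closure[of "{0<..1}" "\<lambda>x. Q x - P x"])
  show "Q x - P x = Q 1 - P 1" if "x \<in> {0<..1}" for x
  proof -
    have "P 1 - P x \<le> Q 1 - Q x" "Q 1 - Q x \<le> P 1 - P x"
      using increment_le[OF assms(2)] concave_pair.increment_le[OF commute assms(1)] that by auto
    then show ?thesis
      by linarith
  qed
qed (use assms in \<open>auto intro!: continuous_intros\<close>)

end

section \<open>Proportional sums\<close>

lemma scaled_mem_Icc:
  fixes a c z :: real
  assumes "0 \<le> a" "0 < c" "z \<in> {0..c}"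
  shows "a / c * z \<in> {0..a}"
proof -
  have "a / c * z \<le> a / c * c"
    using assms by (intro mult_left_mono) auto
  then show ?thesis
    using assms by auto
qed

text \<open>The point z of [0, m + n] is split as z = x + y with x \<in> [0, m], y \<in> [0, n] and x / m = y / n.\<close>

definition proportional_sum :: "real \<Rightarrow> real \<Rightarrow> (real \<Rightarrow> real) \<Rightarrow> (real \<Rightarrow> real) \<Rightarrow> real \<Rightarrow> real" where
  "proportional_sum m n f g z = f (m / (m + n) * z) + g (n / (m + n) * z)"

lemma proportional_sum_parts:
  fixes m n z :: real
  assumes "m > 0" "n > 0" "z \<in> {0..m + n}"
  shows "m / (m + n) * z \<in> {0..m}" "n / (m + n) * z \<in> {0..n}" "m / (m + n) * z + n / (m + n) * z = z"
  using assms scaled_mem_Icc[of m "m + n" z] scaled_mem_Icc[of n "m + n" z]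
  by (auto simp flip: distrib_right add_divide_distrib)

lemma continuous_on_scaled:
  fixes h :: "real \<Rightarrow> real"
  assumes "continuous_on {0..a} h" "0 \<le> a" "0 < c"
  shows "continuous_on {0..c} (\<lambda>z. h (a / c * z))"
  by (intro continuous_on_compose2[OF assms(1)] continuous_intros) (use scaled_mem_Icc assms in auto)

lemma continuous_on_proportional_sum:
  fixes f g :: "real \<Rightarrow> real"
  assumes "m > 0" "n > 0" "continuous_on {0..m} f" "continuous_on {0..n} g"
  shows "continuous_on {0..m + n} (proportional_sum m n f g)"
  unfolding proportional_sum_def[abs_def] using assms
  by (intro continuous_intros continuous_on_scaled) auto

text \<open>The graph of g is the image of the graph of f under the homothety of ratio n / m centred
  at the origin, followed by a vertical translation.\<close>

definition homothetic_graphs :: "real \<Rightarrow> real \<Rightarrow> (real \<Rightarrow> real) \<Rightarrow> (real \<Rightarrow> real) \<Rightarrow> bool" where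
  "homothetic_graphs m n f g \<longleftrightarrow> (\<exists>k. \<forall>x\<in>{0..m}. g (n / m * x) = n / m * f x + k)"

lemma homothetic_graphs_imp_dominated:
  fixes f g :: "real \<Rightarrow> real"
  assumes mn: "m > 0" "n > 0" and f: "concave_on {0..m} f" and fg: "homothetic_graphs m n f g"
    and x: "x \<in> {0..m}" and y: "y \<in> {0..n}"
  shows "f x + g y \<le> proportional_sum m n f g (x + y)"
proof -
  obtain k where k: "\<forall>x\<in>{0..m}. g (n / m * x) = n / m * f x + k"
    using fg by (auto simp: homothetic_graphs_def)
  define \<nu> where "\<nu> = n / (m + n)"
  define y' where "y' = m / n * y"
  have y': "y' \<in> {0..m}" and "n / m * y' = y"
    using mn y scaled_mem_Icc[of m n y] by (auto simp: y'_def)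
  then have gy: "g y = n / m * f y' + k"
    using k by metis
  have one_minus: "1 - \<nu> = m / (m + n)"
    using mn by (simp add: \<nu>_def field_simps)
  then have \<nu>: "0 \<le> \<nu>" "\<nu> \<le> 1" "(m + n) / m * (1 - \<nu>) = 1" "(m + n) / m * \<nu> = n / m"
    using mn by (auto simp: \<nu>_def)
  have "\<nu> * y' = m / (m + n) * y"
    using mn by (simp add: \<nu>_def y'_def)
  then have z: "m / (m + n) * (x + y) = (1 - \<nu>) * x + \<nu> * y'"
    unfolding one_minus by (simp add: distrib_left)
  have z_mem: "m / (m + n) * (x + y) \<in> {0..m}"
    using x y' \<nu> unfolding z by (auto intro: convex_bound_le add_nonneg_nonneg)
  have "n / (m + n) * (x + y) = n / m * (m / (m + n) * (x + y))"
    using mn by simp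
  then have gz: "g (n / (m + n) * (x + y)) = n / m * f (m / (m + n) * (x + y)) + k"
    using k z_mem by metis
  have "f x + g y = (m + n) / m * ((1 - \<nu>) * f x + \<nu> * f y') + k"
    using \<nu>(3,4) by (simp add: gy distrib_left flip: mult.assoc)
  also have "\<dots> \<le> (m + n) / m * f (m / (m + n) * (x + y)) + k"
    using concave_onD[OF f \<nu>(1,2) x y'] mn unfolding z by (intro add_right_mono mult_left_mono) auto
  also have "\<dots> = proportional_sum m n f g (x + y)"
    unfolding proportional_sum_def gz using mn by (simp add: field_simps)
  finally show ?thesis .
qed

lemma concave_pair_rescaled:
  fixes f g :: "real \<Rightarrow> real"
  assumes mn: "m > 0" "n > 0" and f: "concave_on {0..m} f" and g: "concave_on {0..n} g"
    and dom: "\<forall>x\<in>{0..m}. \<forall>y\<in>{0..n}. f x + g y \<le> proportional_sum m n f g (x + y)"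
  shows "concave_pair (m / (m + n)) (n / (m + n)) (\<lambda>s. f (m * s) / m) (\<lambda>s. g (n * s) / n)"
proof
  let ?\<mu> = "m / (m + n)" and ?\<nu> = "n / (m + n)"
  show "?\<mu> > 0" "?\<nu> > 0" "?\<mu> + ?\<nu> = 1"
    using mn by (auto simp: add_divide_distrib[symmetric])
  show "concave_on {0..1} (\<lambda>s. f (m * s) / m)" "concave_on {0..1} (\<lambda>s. g (n * s) / n)"
    using mn f g by (auto intro!: concave_on_cdiv concave_on_compose_mult)
  show "weighted_mean_dominated ?\<mu> ?\<nu> (\<lambda>s. f (m * s) / m) (\<lambda>s. g (n * s) / n)"
    unfolding weighted_mean_dominated_def
  proof (intro ballI)
    fix a b :: real
    assume "a \<in> {0..1}" "b \<in> {0..1}"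
    then have "m * a \<in> {0..m}" "n * b \<in> {0..n}"
      using mn by (auto simp: mult_le_cancel_left1)
    moreover have "?\<mu> * (m * a + n * b) = m * (?\<mu> * a + ?\<nu> * b)"
        "?\<nu> * (m * a + n * b) = n * (?\<mu> * a + ?\<nu> * b)"
      by (simp_all add: algebra_simps)
    ultimately have "f (m * a) + g (n * b) \<le> f (m * (?\<mu> * a + ?\<nu> * b)) + g (n * (?\<mu> * a + ?\<nu> * b))"
      using dom by (force simp: proportional_sum_def)
    then show "?\<mu> * (f (m * a) / m) + ?\<nu> * (g (n * b) / n)
        \<le> ?\<mu> * (f (m * (?\<mu> * a + ?\<nu> * b)) / m) + ?\<nu> * (g (n * (?\<mu> * a + ?\<nu> * b)) / n)"
      using mn by (simp add: divide_right_mono flip: add_divide_distrib)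
  qed
qed

lemma dominated_imp_homothetic_graphs:
  fixes f g :: "real \<Rightarrow> real"
  assumes mn: "m > 0" "n > 0"
    and f: "concave_on {0..m} f" "continuous_on {0..m} f"
    and g: "concave_on {0..n} g" "continuous_on {0..n} g"
    and dom: "\<forall>x\<in>{0..m}. \<forall>y\<in>{0..n}. f x + g y \<le> proportional_sum m n f g (x + y)"
  shows "homothetic_graphs m n f g"
proof -
  define P where "P s = f (m * s) / m" for s
  define Q where "Q s = g (n * s) / n" for s
  have "concave_pair (m / (m + n)) (n / (m + n)) P Q"
    unfolding P_def[abs_def] Q_def[abs_def] using mn f(1) g(1) dom by (rule concave_pair_rescaled)
  moreover have "continuous_on {0..1} P" "continuous_on {0..1} Q"
    unfolding P_def[abs_def] Q_def[abs_def] using mn f(2) g(2)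
    by (auto intro!: continuous_intros continuous_on_compose2[of "{0..m}" f] continuous_on_compose2[of "{0..n}" g]
        simp: mult_le_cancel_left1)
  ultimately obtain c where const: "\<And>s. s \<in> {0..1} \<Longrightarrow> Q s - P s = c"
    using concave_pair.diff_const by blast
  show ?thesis
    unfolding homothetic_graphs_def
  proof (intro exI ballI)
    fix x assume "x \<in> {0..m}"
    then have "Q (x / m) - P (x / m) = c"
      using mn by (intro const) auto
    then have "g (n / m * x) / n = f x / m + c"
      using mn by (simp add: P_def Q_def)
    then show "g (n / m * x) = n / m * f x + n * c"
      using mn by (simp add: divide_eq_eq algebra_simps)
  qed
qed

section \<open>Minkowski sums\<close>

lemma minkowski_sum_region_between_subset_iff:
  fixes uA vA uB vB :: "real \<Rightarrow> real"
  assumes "\<forall>x\<in>{0..m}. uA x \<le> vA x" "\<forall>y\<in>{0..n}. uB y \<le> vB y"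
  shows "minkowski_sum (region_between {0..m} uA vA) (region_between {0..n} uB vB)
      \<subseteq> region_between {0..m + n} (proportional_sum m n uA uB) (proportional_sum m n vA vB) \<longleftrightarrow>
    (\<forall>x\<in>{0..m}. \<forall>y\<in>{0..n}. vA x + vB y \<le> proportional_sum m n vA vB (x + y) \<and>
      proportional_sum m n uA uB (x + y) \<le> uA x + uB y)"
  (is "?sub \<longleftrightarrow> ?ineq")
proof
  assume ?sub
  show ?ineq
  proof (intro ballI)
    fix x y assume "x \<in> {0..m}" "y \<in> {0..n}"
    then have "(x, vA x) + (y, vB y) \<in> minkowski_sum (region_between {0..m} uA vA) (region_between {0..n} uB vB)"
        "(x, uA x) + (y, uB y) \<in> minkowski_sum (region_between {0..m} uA vA) (region_between {0..n} uB vB)"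
      using assms unfolding minkowski_sum_def region_between_def by blast+
    with \<open>?sub\<close> show "vA x + vB y \<le> proportional_sum m n vA vB (x + y) \<and>
        proportional_sum m n uA uB (x + y) \<le> uA x + uB y"
      by (auto simp: region_between_def)
  qed
next
  assume ?ineq
  show ?sub
  proof
    fix p
    assume "p \<in> minkowski_sum (region_between {0..m} uA vA) (region_between {0..n} uB vB)"
    then obtain x ya y yb where p: "p = (x + y, ya + yb)"
      and a: "x \<in> {0..m}" "uA x \<le> ya" "ya \<le> vA x" and b: "y \<in> {0..n}" "uB y \<le> yb" "yb \<le> vB y"
      by (auto simp: minkowski_sum_def region_between_def)
    then show "p \<in> region_between {0..m + n} (proportional_sum m n uA uB) (proportional_sum m n vA vB)"
      using \<open>?ineq\<close> by (fastforce simp: region_between_def)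
  qed
qed

lemma region_between_proportional_sum_subset:
  fixes uA vA uB vB :: "real \<Rightarrow> real"
  assumes mn: "m > 0" "n > 0" and le: "\<forall>x\<in>{0..m}. uA x \<le> vA x" "\<forall>y\<in>{0..n}. uB y \<le> vB y"
  shows "region_between {0..m + n} (proportional_sum m n uA uB) (proportional_sum m n vA vB)
    \<subseteq> minkowski_sum (region_between {0..m} uA vA) (region_between {0..n} uB vB)"
proof
  fix p
  assume "p \<in> region_between {0..m + n} (proportional_sum m n uA uB) (proportional_sum m n vA vB)"
  then obtain z w where p: "p = (z, w)" and z: "z \<in> {0..m + n}"
    and w: "uA (m / (m + n) * z) + uB (n / (m + n) * z) \<le> w" "w \<le> vA (m / (m + n) * z) + vB (n / (m + n) * z)"
    by (auto simp: region_between_def proportional_sum_def)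
  define x where "x = m / (m + n) * z"
  define y where "y = n / (m + n) * z"
  have xy: "x \<in> {0..m}" "y \<in> {0..n}" "x + y = z"
    using proportional_sum_parts[OF mn] z unfolding x_def y_def by auto
  \<comment> \<open>Split the height w between the two fibres above x and y.\<close>
  define wA where "wA = min (vA x) (w - uB y)"
  have "uA x \<le> vA x" "uB y \<le> vB y" "uA x + uB y \<le> w" "w \<le> vA x + vB y"
    using w le xy(1,2) unfolding x_def y_def by auto
  then have "uA x \<le> wA" "wA \<le> vA x" "uB y \<le> w - wA" "w - wA \<le> vB y"
    by (auto simp: wA_def)
  then have "(x, wA) \<in> region_between {0..m} uA vA" "(y, w - wA) \<in> region_between {0..n} uB vB"
    using xy by (auto simp: region_between_def)
  moreover have "p = (x, wA) + (y, w - wA)"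
    using xy p by simp
  ultimately show "p \<in> minkowski_sum (region_between {0..m} uA vA) (region_between {0..n} uB vB)"
    unfolding minkowski_sum_def by blast
qed

lemma integral_stretch_Icc:
  fixes h :: "real \<Rightarrow> real"
  assumes "c > 0"
  shows "integral {0..b} (\<lambda>z. h (c * z)) = integral {0..c * b} h / c"
  using integral_stretch_real[of c 0 "c * b" h] assms by simp

lemma measure_region_between_proportional_sum:
  fixes uA vA uB vB :: "real \<Rightarrow> real"
  assumes mn: "m > 0" "n > 0"
    and A: "continuous_on {0..m} uA" "continuous_on {0..m} vA" "\<forall>x\<in>{0..m}. uA x \<le> vA x"
    and B: "continuous_on {0..n} uB" "continuous_on {0..n} vB" "\<forall>y\<in>{0..n}. uB y \<le> vB y"
  shows "measure lebesgue (region_between {0..m + n} (proportional_sum m n uA uB) (proportional_sum m n vA vB))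
    = (measure lebesgue (region_between {0..m} uA vA) / m
       + measure lebesgue (region_between {0..n} uB vB) / n) * (m + n)"
proof -
  let ?hA = "\<lambda>x. vA x - uA x" and ?hB = "\<lambda>y. vB y - uB y"
  have "\<forall>z\<in>{0..m + n}. proportional_sum m n uA uB z \<le> proportional_sum m n vA vB z"
    using A(3) B(3) proportional_sum_parts[OF mn] by (auto simp: proportional_sum_def intro: add_mono)
  then have "measure lebesgue (region_between {0..m + n} (proportional_sum m n uA uB) (proportional_sum m n vA vB))
      = integral {0..m + n} (\<lambda>z. proportional_sum m n vA vB z - proportional_sum m n uA uB z)"
    using mn A B by (intro measure_region_between continuous_on_proportional_sum)
  also have "\<dots> = integral {0..m + n} (\<lambda>z. ?hA (m / (m + n) * z) + ?hB (n / (m + n) * z))"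
    by (simp add: proportional_sum_def algebra_simps)
  also have "\<dots> = integral {0..m + n} (\<lambda>z. ?hA (m / (m + n) * z)) + integral {0..m + n} (\<lambda>z. ?hB (n / (m + n) * z))"
    using mn A B by (intro integral_add integrable_continuous_interval continuous_on_scaled continuous_intros) auto
  also have "\<dots> = integral {0..m} ?hA / (m / (m + n)) + integral {0..n} ?hB / (n / (m + n))"
    using integral_stretch_Icc[where c = "m / (m + n)" and h = ?hA and b = "m + n"]
      integral_stretch_Icc[where c = "n / (m + n)" and h = ?hB and b = "m + n"] mn
    by simp
  also have "\<dots> = (measure lebesgue (region_between {0..m} uA vA) / m
       + measure lebesgue (region_between {0..n} uB vB) / n) * (m + n)"
    using mn by (simp add: measure_region_between A B field_simps)
  finally show ?thesis .
qed

lemma convex_subset_closed_if_measure_le: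
  fixes S T :: "'a::euclidean_space set"
  assumes S: "convex S" "interior S \<noteq> {}" "S \<in> lmeasurable"
    and T: "closed T" "T \<subseteq> S" and le: "measure lebesgue S \<le> measure lebesgue T"
  shows "S \<subseteq> T"
proof -
  have "T \<in> sets lebesgue"
    using T(1) by (simp add: borel_closed sets_completionI_sets)
  then have "measure lebesgue (S - T) = 0"
    using measurable_measure_Diff[OF S(3) _ T(2)] le measure_mono_fmeasurable[OF T(2) _ S(3)] by simp
  then have "negligible (S - T)"
    using S(3) \<open>T \<in> sets lebesgue\<close> by (simp add: negligible_iff_measure0 fmeasurable_Diff)
  then have "negligible (interior S - T)"
    by (rule negligible_subset) (use interior_subset in blast)
  then have "interior S \<subseteq> T"
    using open_not_negligible[of "interior S - T"] T(1) by (auto simp: open_Diff)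
  then have "closure (interior S) \<subseteq> T"
    using T(1) by (rule closure_minimal)
  then show ?thesis
    using convex_closure_interior[OF S(1,2)] closure_subset by blast
qed

lemma convex_body_minkowski_sum:
  assumes X: "convex_body X" and Y: "convex_body Y"
  shows "convex_body (minkowski_sum X Y)"
proof -
  have "minkowski_sum X Y = (\<Union>x\<in>X. \<Union>y\<in>Y. {x + y})"
    unfolding minkowski_sum_def by blast
  then have convex: "convex (minkowski_sum X Y)"
    using X Y by (simp add: convex_body_def convex_sums)
  have compact: "compact (minkowski_sum X Y)"
    using X Y compact_sums[of X Y] unfolding convex_body_def minkowski_sum_def by blast
  obtain x y where x: "x \<in> interior X" and y: "y \<in> Y"
    using X Y interior_subset by (fastforce simp: convex_body_def)
  have "(\<lambda>z. z + y) ` interior X \<subseteq> minkowski_sum X Y"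
    using y interior_subset unfolding minkowski_sum_def by blast
  moreover have "open ((\<lambda>z. z + y) ` interior X)"
    using open_translation[of "interior X" y] by (simp add: add.commute)
  ultimately have "x + y \<in> interior (minkowski_sum X Y)"
    using x by (meson image_eqI interior_maximal subsetD)
  with convex compact show ?thesis
    unfolding convex_body_def by blast
qed

section \<open>Homotheties and vertical stretchings\<close>

lemma convex_body_homothetic_image:
  assumes X: "convex_body X" and c: "c > 0"
  shows "convex_body ((\<lambda>z. c *\<^sub>R z + t) ` X)"
proof -
  have img: "(\<lambda>z. c *\<^sub>R z + t) ` S = (\<lambda>z. t + c *\<^sub>R z) ` S" for S :: "(real \<times> real) set"
    by (simp add: add.commute)
  have "compact ((\<lambda>z. c *\<^sub>R z + t) ` X)"
    using X by (intro compact_continuous_image continuous_intros) (simp add: convex_body_def)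
  moreover have "convex ((\<lambda>z. c *\<^sub>R z + t) ` X)"
    using X unfolding img by (simp add: convex_body_def convex_affinity)
  moreover have "interior ((\<lambda>z. c *\<^sub>R z + t) ` X) \<noteq> {}"
  proof -
    have "open ((\<lambda>z. c *\<^sub>R z + t) ` interior X)"
      unfolding img using c by (intro open_affinity) auto
    then have "(\<lambda>z. c *\<^sub>R z + t) ` interior X \<subseteq> interior ((\<lambda>z. c *\<^sub>R z + t) ` X)"
      by (intro interior_maximal image_mono interior_subset)
    then show ?thesis
      using X by (auto simp: convex_body_def)
  qed
  ultimately show ?thesis
    by (simp add: convex_body_def)
qed

lemma homothetic_sym: "homothetic X Y \<Longrightarrow> homothetic Y X"
proof -
  assume "homothetic X Y"
  then obtain c t where c: "c > 0" and Y: "Y = (\<lambda>z. c *\<^sub>R z + t) ` X"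
    by (auto simp: homothetic_def)
  then have "X = (\<lambda>z. (1 / c) *\<^sub>R z + (- (1 / c) *\<^sub>R t)) ` Y"
    by (simp add: image_image algebra_simps)
  with c show "homothetic Y X"
    unfolding homothetic_def by (metis divide_pos_pos zero_less_one)
qed

lemma homothetic_image_region_between:
  fixes f g :: "real \<Rightarrow> real"
  assumes c: "c > 0"
  shows "(\<lambda>z. c *\<^sub>R z + (t1, t2)) ` region_between I f g =
    region_between ((\<lambda>x. c * x + t1) ` I) (\<lambda>x. c * f ((x - t1) / c) + t2) (\<lambda>x. c * g ((x - t1) / c) + t2)"
proof (intro set_eqI iffI)
  fix p
  assume "p \<in> (\<lambda>z. c *\<^sub>R z + (t1, t2)) ` region_between I f g"
  then show "p \<in> region_between ((\<lambda>x. c * x + t1) ` I) (\<lambda>x. c * f ((x - t1) / c) + t2) (\<lambda>x. c * g ((x - t1) / c) + t2)"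
    using c by (auto simp: region_between_def)
next
  fix p
  assume p: "p \<in> region_between ((\<lambda>x. c * x + t1) ` I) (\<lambda>x. c * f ((x - t1) / c) + t2) (\<lambda>x. c * g ((x - t1) / c) + t2)"
  obtain x y where "p = (x, y)"
    by fastforce
  with p c have "((x - t1) / c, (y - t2) / c) \<in> region_between I f g"
    by (auto simp: region_between_def pos_le_divide_eq pos_divide_le_eq mult.commute)
  moreover have "p = c *\<^sub>R ((x - t1) / c, (y - t2) / c) + (t1, t2)"
    using \<open>p = (x, y)\<close> c by simp
  ultimately show "p \<in> (\<lambda>z. c *\<^sub>R z + (t1, t2)) ` region_between I f g"
    by blast
qed

lemma vertical_stretching_eq_region_between:
  "vertical_stretching X h = region_between (fst ` X) (lower_fun X) (\<lambda>x. upper_fun X x + h)"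
  by (simp add: vertical_stretching_def region_between_def)

lemma region_between_eq_vertical_stretching:
  fixes f g :: "real \<Rightarrow> real"
  assumes X: "convex_body X" and h: "h \<ge> 0" and le: "\<forall>x\<in>I. f x \<le> g x"
    and eq: "region_between I f g = vertical_stretching X h"
  shows "X = region_between I f (\<lambda>x. g x - h)" "\<forall>x\<in>I. f x \<le> g x - h"
proof -
  have X': "convex X" "compact X"
    using X by (auto simp: convex_body_def)
  have bounds: "\<forall>x\<in>fst ` X. lower_fun X x \<le> upper_fun X x"
    using order_trans[OF lower_fun_le[OF X'(2)] le_upper_fun[OF X'(2)]] by force
  then have I: "I = fst ` X" and fg: "\<forall>x\<in>I. f x = lower_fun X x \<and> g x = upper_fun X x + h"
    using eq le h unfolding vertical_stretching_eq_region_between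
    by (subst (asm) region_between_eq_iff; auto)+
  show "\<forall>x\<in>I. f x \<le> g x - h"
    using I fg bounds by auto
  have "X = region_between (fst ` X) (lower_fun X) (upper_fun X)"
    by (rule convex_compact_eq_region_between[OF X'])
  also have "\<dots> = region_between I f (\<lambda>x. g x - h)"
    using I fg by (intro region_between_cong) auto
  finally show "X = region_between I f (\<lambda>x. g x - h)" .
qed

lemma homothetic_regions_between_imp_shifts:
  fixes f g f' g' :: "real \<Rightarrow> real"
  assumes mn: "m > 0" "n > 0" and le: "\<forall>x\<in>{0..m}. f x \<le> g x" "\<forall>y\<in>{0..n}. f' y \<le> g' y"
    and hom: "homothetic (region_between {0..m} f g) (region_between {0..n} f' g')"
  shows "\<exists>t. \<forall>x\<in>{0..m}. f' (n / m * x) = n / m * f x + t \<and> g' (n / m * x) = n / m * g x + t"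
proof -
  obtain c t1 t2 where c: "c > 0"
    and eq: "region_between {0..n} f' g' = (\<lambda>z. c *\<^sub>R z + (t1, t2)) ` region_between {0..m} f g"
    using hom by (auto simp: homothetic_def)
  have img: "(\<lambda>x. c * x + t1) ` {0..m} = {t1..c * m + t1}"
    using mn c by (simp add: image_affinity_atLeastAtMost)
  have "(x - t1) / c \<in> {0..m}" if "x \<in> {t1..c * m + t1}" for x
    using that c by (auto simp: pos_divide_le_eq mult.commute)
  then have "\<forall>x\<in>{t1..c * m + t1}. c * f ((x - t1) / c) + t2 \<le> c * g ((x - t1) / c) + t2"
    using le(1) c by simp
  then have "{0..n} = {t1..c * m + t1}"
    and shifts: "\<forall>y\<in>{0..n}. f' y = c * f ((y - t1) / c) + t2 \<and> g' y = c * g ((y - t1) / c) + t2"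
    using eq le(2) unfolding homothetic_image_region_between[OF c] img
    by (subst (asm) region_between_eq_iff; auto)+
  then have "t1 = 0" "c = n / m"
    using mn by (auto simp: field_simps)
  show ?thesis
  proof (intro exI ballI)
    fix x assume "x \<in> {0..m}"
    then have "n / m * x \<in> {0..n}"
      using mn by (intro scaled_mem_Icc) auto
    then show "f' (n / m * x) = n / m * f x + t2 \<and> g' (n / m * x) = n / m * g x + t2"
      using shifts \<open>t1 = 0\<close> \<open>c = n / m\<close> mn by auto
  qed
qed

lemma stretched_homothetic_imp_homothetic_graphs:
  fixes uA vA uB vB :: "real \<Rightarrow> real"
  assumes mn: "m > 0" "n > 0" and le: "\<forall>x\<in>{0..m}. uA x \<le> vA x" "\<forall>y\<in>{0..n}. uB y \<le> vB y"
    and bodies: "convex_body A'" "convex_body B'" and hom: "homothetic A' B'"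
    and stretch: "is_vertical_stretching_of (region_between {0..m} uA vA) A'"
      "is_vertical_stretching_of (region_between {0..n} uB vB) B'"
  shows "homothetic_graphs m n vA vB \<and> homothetic_graphs m n (\<lambda>x. - uA x) (\<lambda>x. - uB x)"
proof -
  obtain h k where h: "h \<ge> 0" "region_between {0..m} uA vA = vertical_stretching A' h"
    and k: "k \<ge> 0" "region_between {0..n} uB vB = vertical_stretching B' k"
    using stretch by (auto simp: is_vertical_stretching_of_def)
  note A' = region_between_eq_vertical_stretching[OF bodies(1) h(1) le(1) h(2)]
  note B' = region_between_eq_vertical_stretching[OF bodies(2) k(1) le(2) k(2)]
  obtain t where "\<forall>x\<in>{0..m}. uB (n / m * x) = n / m * uA x + t \<and> vB (n / m * x) - k = n / m * (vA x - h) + t"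
    using homothetic_regions_between_imp_shifts[OF mn A'(2) B'(2)] hom unfolding A'(1) B'(1) by blast
  then have "\<forall>x\<in>{0..m}. vB (n / m * x) = n / m * vA x + (t + k - n / m * h)"
      "\<forall>x\<in>{0..m}. - uB (n / m * x) = n / m * (- uA x) + (- t)"
    by (auto simp: algebra_simps)
  then show ?thesis
    unfolding homothetic_graphs_def by blast
qed

lemma shift_relation_inverse:
  fixes f g :: "real \<Rightarrow> real"
  assumes mn: "m > 0" "n > 0" and rel: "\<forall>x\<in>{0..m}. g (n / m * x) = n / m * f x + k" and y: "y \<in> {0..n}"
  shows "g y = n / m * f (m / n * y) + k"
proof -
  have "m / n * y \<in> {0..m}"
    using y mn scaled_mem_Icc[of m n y] by auto
  then have "g (n / m * (m / n * y)) = n / m * f (m / n * y) + k"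
    using rel by blast
  then show ?thesis
    using mn by simp
qed

lemma shift_relation_swap:
  fixes f g :: "real \<Rightarrow> real"
  assumes "m > 0" "n > 0" "\<forall>x\<in>{0..m}. g (n / m * x) = n / m * f x + k"
  shows "\<forall>y\<in>{0..n}. f (m / n * y) = m / n * g y + (- (m / n) * k)"
  using shift_relation_inverse[OF assms] assms(1,2) by (simp add: field_simps)

lemma homothetic_image_region_between_shift:
  fixes uA vA uB vB :: "real \<Rightarrow> real"
  assumes mn: "m > 0" "n > 0" and le: "\<forall>x\<in>{0..m}. uA x \<le> vA x"
    and upper: "\<forall>x\<in>{0..m}. vB (n / m * x) = n / m * vA x + k1"
    and lower: "\<forall>x\<in>{0..m}. uB (n / m * x) = n / m * uA x + k2"
  shows "(\<lambda>z. (n / m) *\<^sub>R z + (0, k2)) ` region_between {0..m} uA vA =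
      region_between {0..n} uB (\<lambda>y. vB y - (k1 - k2))"
    and "\<forall>y\<in>{0..n}. uB y \<le> vB y - (k1 - k2)"
proof -
  note repr = shift_relation_inverse[OF mn upper] shift_relation_inverse[OF mn lower]
  show "(\<lambda>z. (n / m) *\<^sub>R z + (0, k2)) ` region_between {0..m} uA vA =
      region_between {0..n} uB (\<lambda>y. vB y - (k1 - k2))"
    unfolding homothetic_image_region_between[OF divide_pos_pos[OF mn(2,1)]]
  proof (rule region_between_cong)
    show "(\<lambda>x. n / m * x + 0) ` {0..m} = {0..n}"
      using mn image_affinity_atLeastAtMost[of "n / m" 0 0 m] by simp
  qed (use repr mn in \<open>simp_all add: field_simps\<close>)
  show "\<forall>y\<in>{0..n}. uB y \<le> vB y - (k1 - k2)"
  proof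
    fix y assume y: "y \<in> {0..n}"
    have "n / m * uA (m / n * y) \<le> n / m * vA (m / n * y)"
      using le y mn scaled_mem_Icc[of m n y] by (intro mult_left_mono) auto
    then show "uB y \<le> vB y - (k1 - k2)"
      using repr y by simp
  qed
qed

lemma shifts_imp_stretched_homothetic:
  fixes uA vA uB vB :: "real \<Rightarrow> real"
  assumes mn: "m > 0" "n > 0" and le: "\<forall>x\<in>{0..m}. uA x \<le> vA x"
    and A: "convex_body (region_between {0..m} uA vA)"
    and upper: "\<forall>x\<in>{0..m}. vB (n / m * x) = n / m * vA x + k1"
    and lower: "\<forall>x\<in>{0..m}. uB (n / m * x) = n / m * uA x + k2"
    and k: "k2 \<le> k1"
  shows "\<exists>A' B'. convex_body A' \<and> convex_body B' \<and> homothetic A' B' \<and>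
    is_vertical_stretching_of (region_between {0..m} uA vA) A' \<and>
    is_vertical_stretching_of (region_between {0..n} uB vB) B'"
proof -
  let ?A = "region_between {0..m} uA vA"
  define B' where "B' = (\<lambda>z. (n / m) *\<^sub>R z + (0, k2)) ` ?A"
  note B' = homothetic_image_region_between_shift[OF mn le upper lower, folded B'_def]
  have "?A = vertical_stretching ?A 0"
    using le by (simp add: vertical_stretching_region_between)
  moreover have "region_between {0..n} uB vB = vertical_stretching B' (k1 - k2)"
    unfolding B'(1) using B'(2) by (simp add: vertical_stretching_region_between)
  moreover have "convex_body B'"
    using A mn unfolding B'_def by (simp add: convex_body_homothetic_image)
  moreover have "homothetic ?A B'"
    using mn unfolding B'_def homothetic_def by (intro exI[of _ "n / m"] conjI exI[of _ "(0, k2)"]) auto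
  ultimately show ?thesis
    using A k unfolding is_vertical_stretching_of_def by (metis diff_ge_0_iff_ge order_refl)
qed

lemma homothetic_graphs_imp_stretched_homothetic:
  fixes uA vA uB vB :: "real \<Rightarrow> real"
  assumes mn: "m > 0" "n > 0" and le: "\<forall>x\<in>{0..m}. uA x \<le> vA x" "\<forall>y\<in>{0..n}. uB y \<le> vB y"
    and bodies: "convex_body (region_between {0..m} uA vA)" "convex_body (region_between {0..n} uB vB)"
    and upper: "homothetic_graphs m n vA vB" and lower: "homothetic_graphs m n (\<lambda>x. - uA x) (\<lambda>x. - uB x)"
  shows "\<exists>A' B'. convex_body A' \<and> convex_body B' \<and> homothetic A' B' \<and>
    is_vertical_stretching_of (region_between {0..m} uA vA) A' \<and>
    is_vertical_stretching_of (region_between {0..n} uB vB) B'"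
proof -
  obtain k1 k where k1: "\<forall>x\<in>{0..m}. vB (n / m * x) = n / m * vA x + k1"
    and k: "\<forall>x\<in>{0..m}. - uB (n / m * x) = n / m * (- uA x) + k"
    using upper lower by (auto simp: homothetic_graphs_def)
  define k2 where "k2 = - k"
  have k2: "\<forall>x\<in>{0..m}. uB (n / m * x) = n / m * uA x + k2"
    using k by (auto simp: k2_def)
  \<comment> \<open>B is stretched if its upper boundary is shifted more than its lower one, otherwise A.\<close>
  show ?thesis
  proof (cases "k2 \<le> k1")
    case True
    then show ?thesis
      using shifts_imp_stretched_homothetic[OF mn le(1) bodies(1) k1 k2] by blast
  next
    case False
    have "- (m / n) * k2 \<le> - (m / n) * k1"
      using False mn by (intro mult_left_mono_neg) auto
    then show ?thesis
      using shifts_imp_stretched_homothetic[OF mn(2,1) le(2) bodies(2)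
          shift_relation_swap[OF mn k1] shift_relation_swap[OF mn k2]]
        homothetic_sym by blast
  qed
qed

locale convex_graph_bodies =
  fixes m n :: real and uA vA uB vB :: "real \<Rightarrow> real"
  assumes widths: "m > 0" "n > 0"
    and lower_convex: "convex_on {0..m} uA" "convex_on {0..n} uB"
    and upper_concave: "concave_on {0..m} vA" "concave_on {0..n} vB"
    and lower_le_upper: "\<forall>x\<in>{0..m}. uA x \<le> vA x" "\<forall>y\<in>{0..n}. uB y \<le> vB y"
    and bodies: "convex_body (region_between {0..m} uA vA)" "convex_body (region_between {0..n} uB vB)"
begin

abbreviation "A \<equiv> region_between {0..m} uA vA"
abbreviation "B \<equiv> region_between {0..n} uB vB"
abbreviation "mean_region \<equiv> region_between {0..m + n} (proportional_sum m n uA uB) (proportional_sum m n vA vB)"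

lemma continuous:
  "continuous_on {0..m} uA" "continuous_on {0..m} vA" "continuous_on {0..n} uB" "continuous_on {0..n} vB"
  using bodies lower_le_upper lower_convex upper_concave
  by (auto simp: convex_body_def intro: continuous_on_concave_upper_boundary continuous_on_convex_lower_boundary)

lemma area_minkowski_sum_eq_iff_subset:
  "area (minkowski_sum A B) = (area A / m + area B / n) * (m + n) \<longleftrightarrow> minkowski_sum A B \<subseteq> mean_region"
proof -
  have closed: "closed mean_region"
    using widths continuous by (intro closed_region_between continuous_on_proportional_sum)
  have sub: "mean_region \<subseteq> minkowski_sum A B"
    using widths lower_le_upper by (rule region_between_proportional_sum_subset)
  have measure: "measure lebesgue mean_region = (area A / m + area B / n) * (m + n)"
    unfolding area_def using widths continuous lower_le_upper by (intro measure_region_between_proportional_sum)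
  have C: "convex_body (minkowski_sum A B)"
    using bodies by (rule convex_body_minkowski_sum)
  show ?thesis
  proof
    assume "area (minkowski_sum A B) = (area A / m + area B / n) * (m + n)"
    moreover have "convex (minkowski_sum A B)" "interior (minkowski_sum A B) \<noteq> {}"
      "minkowski_sum A B \<in> lmeasurable"
      using C by (auto simp: convex_body_def lmeasurable_compact)
    ultimately show "minkowski_sum A B \<subseteq> mean_region"
      using convex_subset_closed_if_measure_le[OF _ _ _ closed sub] measure by (simp add: area_def)
  next
    assume "minkowski_sum A B \<subseteq> mean_region"
    then show "area (minkowski_sum A B) = (area A / m + area B / n) * (m + n)"
      using sub measure by (simp add: area_def subset_antisym)
  qed
qed

lemma minkowski_sum_subset_iff_homothetic_graphs:
  "minkowski_sum A B \<subseteq> mean_region \<longleftrightarrow>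
    homothetic_graphs m n vA vB \<and> homothetic_graphs m n (\<lambda>x. - uA x) (\<lambda>x. - uB x)"
proof -
  have lower: "proportional_sum m n uA uB (x + y) \<le> uA x + uB y \<longleftrightarrow>
      - uA x + - uB y \<le> proportional_sum m n (\<lambda>x. - uA x) (\<lambda>x. - uB x) (x + y)" for x y
    by (auto simp: proportional_sum_def)
  have v: "(\<forall>x\<in>{0..m}. \<forall>y\<in>{0..n}. vA x + vB y \<le> proportional_sum m n vA vB (x + y))
      \<longleftrightarrow> homothetic_graphs m n vA vB"
    using dominated_imp_homothetic_graphs[OF widths upper_concave(1) continuous(2) upper_concave(2) continuous(4)]
      homothetic_graphs_imp_dominated[OF widths upper_concave(1)] by blast
  have "concave_on {0..m} (\<lambda>x. - uA x)" "concave_on {0..n} (\<lambda>x. - uB x)"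
    "continuous_on {0..m} (\<lambda>x. - uA x)" "continuous_on {0..n} (\<lambda>x. - uB x)"
    using lower_convex continuous by (simp_all add: convex_on_iff_concave continuous_on_minus)
  then have u: "(\<forall>x\<in>{0..m}. \<forall>y\<in>{0..n}.
        - uA x + - uB y \<le> proportional_sum m n (\<lambda>x. - uA x) (\<lambda>x. - uB x) (x + y))
      \<longleftrightarrow> homothetic_graphs m n (\<lambda>x. - uA x) (\<lambda>x. - uB x)"
    using dominated_imp_homothetic_graphs[OF widths] homothetic_graphs_imp_dominated[OF widths] by blast
  show ?thesis
    unfolding minkowski_sum_region_between_subset_iff[OF lower_le_upper] lower
    using u v by blast
qed

theorem area_minkowski_sum_eq_iff_stretched_homothetic:
  "area (minkowski_sum A B) = (area A / m + area B / n) * (m + n) \<longleftrightarrow>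
    (\<exists>A' B'. convex_body A' \<and> convex_body B' \<and> homothetic A' B' \<and>
      is_vertical_stretching_of A A' \<and> is_vertical_stretching_of B B')"
  unfolding area_minkowski_sum_eq_iff_subset minkowski_sum_subset_iff_homothetic_graphs
  using stretched_homothetic_imp_homothetic_graphs[OF widths lower_le_upper]
    homothetic_graphs_imp_stretched_homothetic[OF widths lower_le_upper bodies]
  by blast

end

theorem theorem4p2:
  fixes A B :: "(real \<times> real) set" and m n :: real
    and uA vA uB vB :: "real \<Rightarrow> real"
  assumes "m > 0" and "n > 0"
    and "convex_on {0..m} uA" and "concave_on {0..m} vA" and "\<forall>x\<in>{0..m}. uA x \<le> vA x"
    and "convex_on {0..n} uB" and "concave_on {0..n} vB" and "\<forall>x\<in>{0..n}. uB x \<le> vB x"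
    and "A = {(x, y). 0 \<le> x \<and> x \<le> m \<and> uA x \<le> y \<and> y \<le> vA x}"
    and "B = {(x, y). 0 \<le> x \<and> x \<le> n \<and> uB x \<le> y \<and> y \<le> vB x}"
    and "convex_body A" and "convex_body B"
  shows "area (minkowski_sum A B) = (area A / m + area B / n) * (m + n)
     \<longleftrightarrow> (\<exists>A' B'. convex_body A' \<and> convex_body B' \<and> homothetic A' B' \<and>
            is_vertical_stretching_of A A' \<and> is_vertical_stretching_of B B')"
proof -
  have A: "A = region_between {0..m} uA vA" and B: "B = region_between {0..n} uB vB"
    using assms(9,10) by (auto simp: region_between_def)
  have "convex_graph_bodies m n uA vA uB vB"
    using assms unfolding A B by unfold_locales auto
  then show ?thesis
    unfolding A B by (rule convex_graph_bodies.area_minkowski_sum_eq_iff_stretched_homothetic)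
qed

end
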